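(* Let $q \ge 2$ be an integer and let $l$ be a positive integer, with $l \ge 1$ when $n$ is odd and $l \ge 2$ when $n$ is even. Then AME states of defect $l$ in $(\mathbb{C}^q)^{\otimes n}$ do not exist if $$\frac{(m+l)!}{(m+1)!} > \frac{q^{2l}-1}{q^2-1}\cdot\frac{(2l-1)!}{l!} \quad \text{when } n = 2m,$$ and if $$\frac{(m+l+1)!}{(m+1)!} > \frac{q^{2l+1}-1}{q-1}\cdot\frac{(2l)!}{l!} \quad \text{when } n = 2m+1.$$
   Context: A pure state $|\psi\rangle \in (\mathbb{C}^q)^{\otimes n}$ is called $k$-uniform if, with $\rho = |\psi\rangle\langle\psi|$, for every subset $S \subseteq \{1,\dots,n\}$ with $|S| = k$ the reduced state of $\rho$ on the parties in $S$ equals $I/q^k$, where $I$ is the identity on $(\mathbb{C}^q)^{\otimes k}$. For an integer $l \ge 0$, an AME state of defect $l$ in $(\mathbb{C}^q)^{\otimes n}$ is a $(\lfloor n/2\rfloor - l)$-uniform state in $(\mathbb{C}^q)^{\otimes n}$. *)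

theory Defs
  imports "HOL-Analysis.Analysis"
begin

text \<open>A vector in (C^q)^{\<otimes>n} is represented by its coordinates in the computational
  basis: a function psi from basis labels (tuples i_0..i_{n-1}, with i_j < q, encoded as
  extensional functions on {..<n}) to complex numbers.\<close>

definition configs :: "nat set \<Rightarrow> nat \<Rightarrow> (nat \<Rightarrow> nat) set" where
  "configs S q = PiE S (\<lambda>_. {..<q})"

definition reduced_state ::
  "nat \<Rightarrow> nat \<Rightarrow> ((nat \<Rightarrow> nat) \<Rightarrow> complex) \<Rightarrow> nat set \<Rightarrow> (nat \<Rightarrow> nat) \<Rightarrow> (nat \<Rightarrow> nat) \<Rightarrow> complex" where
  "reduced_state q n psi S a b =
     (\<Sum>c\<in>configs ({..<n} - S) q.
        psi (\<lambda>i. if i \<in> S then a i else c i) * cnj (psi (\<lambda>i. if i \<in> S then b i else c i)))"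

definition k_uniform :: "nat \<Rightarrow> nat \<Rightarrow> nat \<Rightarrow> ((nat \<Rightarrow> nat) \<Rightarrow> complex) \<Rightarrow> bool" where
  "k_uniform q n k psi \<longleftrightarrow>
     (\<Sum>x\<in>configs {..<n} q. (cmod (psi x))\<^sup>2) = 1 \<and>
     (\<forall>S. S \<subseteq> {..<n} \<and> card S = k \<longrightarrow>
        (\<forall>a\<in>configs S q. \<forall>b\<in>configs S q.
           reduced_state q n psi S a b = (if a = b then 1 / (of_nat q) ^ k else 0)))"

definition AME_defect :: "nat \<Rightarrow> nat \<Rightarrow> nat \<Rightarrow> ((nat \<Rightarrow> nat) \<Rightarrow> complex) \<Rightarrow> bool" where
  "AME_defect q n l psi \<longleftrightarrow> k_uniform q n (n div 2 - l) psi"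

end

theory Submission
  imports Defs
begin

text \<open>For a pure state and a set T of parties let P(T) be the purity tr rho_T^2 of the reduced
  state; since the global state is pure, P(T) = P(complement of T). The weights
  A(S) = sum over T \<subseteq> S of (-1)^|S - T| q^|T| P(T) are nonnegative, being sums of squared
  expectation values of product operators that are traceless exactly on the sites in S. For a
  k-uniform state A({}) = 1 and A(S) = 0 for 0 < |S| \<le> k. Summing the complement symmetry over
  all s-subsets and expressing it through the A(S) gives a linear identity for every s \<le> n/2.
  Subtracting lam times the identity for k from the one for s, with lam chosen so that every
  A(S) with |S| > k gets a nonpositive coefficient, forces
  C(n, s) (q^(n - 2s) - 1) \<le> lam C(n, k) (q^(n - 2k) - 1).
  For k = n div 2 - l and s = n div 2 - 1 (n even) or s = n div 2 (n odd) this contradicts the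
  hypothesis.\<close>

type_synonym config = "nat \<Rightarrow> nat"

type_synonym kernel = "config \<Rightarrow> config \<Rightarrow> config \<Rightarrow> config \<Rightarrow> real"

definition glue :: "nat set \<Rightarrow> config \<Rightarrow> config \<Rightarrow> config" where
  "glue T a c = (\<lambda>i. if i \<in> T then a i else c i)"

lemma finite_configs [simp]: "finite S \<Longrightarrow> finite (configs S q)"
  unfolding configs_def by (intro finite_PiE) auto

lemma card_configs: "finite S \<Longrightarrow> card (configs S q) = q ^ card S"
  unfolding configs_def by (simp add: card_PiE)

lemma configs_undefined: "x \<in> configs S q \<Longrightarrow> i \<notin> S \<Longrightarrow> x i = undefined"
  unfolding configs_def by (auto simp: PiE_def extensional_def)

lemma configs_less: "x \<in> configs S q \<Longrightarrow> i \<in> S \<Longrightarrow> x i < q"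
  unfolding configs_def by (auto simp: PiE_def)

lemma configs_eqI:
  "x \<in> configs S q \<Longrightarrow> y \<in> configs S q \<Longrightarrow> (\<And>i. i \<in> S \<Longrightarrow> x i = y i) \<Longrightarrow> x = y"
  by (rule ext) (metis configs_undefined)

lemma configs_eq_iff: "x \<in> configs S q \<Longrightarrow> y \<in> configs S q \<Longrightarrow> x = y \<longleftrightarrow> (\<forall>i\<in>S. x i = y i)"
  using configs_eqI by blast

lemma glue_in_configs:
  "T \<subseteq> V \<Longrightarrow> a \<in> configs T q \<Longrightarrow> c \<in> configs (V - T) q \<Longrightarrow> glue T a c \<in> configs V q"
  unfolding configs_def glue_def by (auto simp: PiE_def extensional_def Pi_def)

lemma glue_eq_glue_iff:
  assumes "a \<in> configs T q" "a' \<in> configs T q" "c \<in> configs W q" "c' \<in> configs W q" "T \<inter> W = {}"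
  shows "glue T a c = glue T a' c' \<longleftrightarrow> a = a' \<and> c = c'"
proof
  assume eq: "glue T a c = glue T a' c'"
  have "a = a'"
    by (rule configs_eqI[OF assms(1,2)]) (metis eq glue_def)
  moreover have "c = c'"
    by (rule configs_eqI[OF assms(3,4)]) (metis assms(5) disjoint_iff eq glue_def)
  ultimately show "a = a' \<and> c = c'" ..
qed simp

lemma bij_betw_glue:
  assumes "T \<subseteq> V"
  shows "bij_betw (\<lambda>(a, c). glue T a c) (configs T q \<times> configs (V - T) q) (configs V q)"
proof (rule bij_betwI')
  fix y assume y: "y \<in> configs V q"
  have "restrict y T \<in> configs T q" "restrict y (V - T) \<in> configs (V - T) q"
    using y assms unfolding configs_def by (auto simp: PiE_def Pi_def)
  moreover have "y = glue T (restrict y T) (restrict y (V - T))"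
    using y assms by (auto simp: glue_def fun_eq_iff configs_undefined)
  ultimately show "\<exists>x\<in>configs T q \<times> configs (V - T) q. y = (case x of (a, c) \<Rightarrow> glue T a c)"
    by auto
qed (use glue_eq_glue_iff[of _ T q] glue_in_configs[OF assms] in auto)

lemma sum_configs_glue:
  assumes "T \<subseteq> V"
  shows "(\<Sum>x\<in>configs V q. g x) = (\<Sum>a\<in>configs T q. \<Sum>c\<in>configs (V - T) q. g (glue T a c))"
  by (subst sum.reindex_bij_betw[OF bij_betw_glue[OF assms], symmetric])
     (simp add: sum.cartesian_product case_prod_beta)

lemma reduced_state_glue:
  "reduced_state q n psi T a b = (\<Sum>c\<in>configs ({..<n} - T) q. psi (glue T a c) * cnj (psi (glue T b c)))"
  unfolding reduced_state_def glue_def ..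

lemma reduced_state_partial_trace:
  assumes ST: "S \<subseteq> T" and T: "T \<subseteq> {..<n}"
  shows "reduced_state q n psi S a b =
     (\<Sum>d\<in>configs (T - S) q. reduced_state q n psi T (glue S a d) (glue S b d))"
proof -
  have "T - S \<subseteq> {..<n} - S" and "({..<n} - S) - (T - S) = {..<n} - T"
    using ST T by auto
  moreover have "glue S z (glue (T - S) d c) = glue T (glue S z d) c" for z d c
    using ST by (auto simp: glue_def fun_eq_iff)
  ultimately show ?thesis
    unfolding reduced_state_glue by (simp add: sum_configs_glue[of "T - S" "{..<n} - S"])
qed

lemma prod_of_bool: "finite A \<Longrightarrow> (\<Prod>i\<in>A. of_bool (P i)) = (of_bool (\<forall>i\<in>A. P i) :: 'a::comm_semiring_1)"
  by (induction A rule: finite_induct) auto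

lemma prod_if_eq:
  "finite N \<Longrightarrow> T \<subseteq> N \<Longrightarrow> (\<Prod>i\<in>N. if i \<in> T then f i else g i) = prod f T * prod g (N - T)"
  by (simp add: prod.If_cases Int_absorb1 Diff_eq)

lemma prod_Diff_split:
  "finite N \<Longrightarrow> T \<subseteq> S \<Longrightarrow> S \<subseteq> N \<Longrightarrow> prod g (N - T) = prod g (S - T) * prod g (N - S)"
  by (subst prod.union_disjoint[symmetric]) (auto intro: finite_subset intro!: prod.cong)

lemma prod_if_scale:
  fixes c :: "'a::comm_semiring_1"
  assumes "finite N" "T \<subseteq> N"
  shows "(\<Prod>i\<in>N. if i \<in> T then c * f i else g i) = c ^ card T * (\<Prod>i\<in>N. if i \<in> T then f i else g i)"
proof -
  have "N \<inter> {i. i \<in> T} = T" using assms(2) by blast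
  then show ?thesis using assms(1) by (simp add: prod.If_cases prod.distrib mult.assoc)
qed

lemma prod_if_diff_eq_sum:
  fixes f g :: "'b \<Rightarrow> 'a::comm_ring_1"
  assumes N: "finite N" and S: "S \<subseteq> N"
  shows "(\<Prod>i\<in>N. if i \<in> S then f i - g i else g i)
       = (\<Sum>T\<in>Pow S. (-1) ^ card (S - T) * (\<Prod>i\<in>N. if i \<in> T then f i else g i))"
proof -
  have fS: "finite S" using N S by (rule finite_subset[rotated])
  have "(\<Prod>i\<in>N. if i \<in> S then f i - g i else g i) = (\<Prod>i\<in>S. f i + - g i) * prod g (N - S)"
    using prod_if_eq[OF N S] by simp
  also have "\<dots> = (\<Sum>T\<in>Pow S. prod f T * (\<Prod>i\<in>S - T. - g i)) * prod g (N - S)"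
    by (simp only: prod_add[OF fS])
  also have "\<dots> = (\<Sum>T\<in>Pow S. (-1) ^ card (S - T) * (prod f T * prod g (N - T)))"
    unfolding sum_distrib_right
  proof (intro sum.cong refl)
    fix T assume "T \<in> Pow S"
    then have "prod g (N - T) = prod g (S - T) * prod g (N - S)"
      using N S by (intro prod_Diff_split) auto
    then show "prod f T * (\<Prod>i\<in>S - T. - g i) * prod g (N - S)
        = (-1) ^ card (S - T) * (prod f T * prod g (N - T))"
      by (simp add: prod_uminus mult_ac)
  qed
  also have "\<dots> = (\<Sum>T\<in>Pow S. (-1) ^ card (S - T) * (\<Prod>i\<in>N. if i \<in> T then f i else g i))"
    using N S by (intro sum.cong refl) (simp add: prod_if_eq)
  finally show ?thesis .
qed

section \<open>Quartic forms in the state\<close>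

text \<open>The Hermitian form of K, read as a matrix indexed by pairs (x, y) and (x', y'), evaluated
  at the density matrix psi x * cnj (psi y).\<close>
definition quartic_form :: "nat \<Rightarrow> nat \<Rightarrow> (config \<Rightarrow> complex) \<Rightarrow> kernel \<Rightarrow> complex" where
  "quartic_form q n psi K =
     (\<Sum>x\<in>configs {..<n} q. \<Sum>y\<in>configs {..<n} q. \<Sum>x'\<in>configs {..<n} q. \<Sum>y'\<in>configs {..<n} q.
        psi x * cnj (psi y) * cnj (psi x') * psi y' * of_real (K x y x' y'))"

lemma quartic_form_sum:
  assumes "finite I"
  shows "quartic_form q n psi (\<lambda>x y x' y'. \<Sum>t\<in>I. c t * K t x y x' y')
       = (\<Sum>t\<in>I. of_real (c t) * quartic_form q n psi (K t))"
  unfolding quartic_form_def of_real_sum of_real_mult sum_distrib_right sum_distrib_left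
  by (simp add: sum.swap[where B = I] mult_ac)

lemma quartic_form_swap: "quartic_form q n psi (\<lambda>x y x' y'. K x x' y y') = quartic_form q n psi K"
  unfolding quartic_form_def by (subst (2) sum.swap) (simp add: mult_ac)

lemma quartic_form_glue:
  assumes "T \<subseteq> {..<n}"
  shows "quartic_form q n psi K =
    (\<Sum>a1\<in>configs T q. \<Sum>c1\<in>configs ({..<n} - T) q. \<Sum>a2\<in>configs T q. \<Sum>c2\<in>configs ({..<n} - T) q.
     \<Sum>a3\<in>configs T q. \<Sum>c3\<in>configs ({..<n} - T) q. \<Sum>a4\<in>configs T q. \<Sum>c4\<in>configs ({..<n} - T) q.
       psi (glue T a1 c1) * cnj (psi (glue T a2 c2)) * cnj (psi (glue T a3 c3)) * psi (glue T a4 c4)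
       * of_real (K (glue T a1 c1) (glue T a2 c2) (glue T a3 c3) (glue T a4 c4)))"
  unfolding quartic_form_def by (simp only: sum_configs_glue[OF assms])

lemma quartic_form_gram:
  fixes w :: "'g \<Rightarrow> config \<Rightarrow> config \<Rightarrow> real"
  assumes "finite G"
    and K: "\<And>x y x' y'. x \<in> configs {..<n} q \<Longrightarrow> y \<in> configs {..<n} q \<Longrightarrow> x' \<in> configs {..<n} q \<Longrightarrow>
              y' \<in> configs {..<n} q \<Longrightarrow> K x y x' y' = (\<Sum>g\<in>G. w g x y * w g x' y')"
  shows "quartic_form q n psi K = of_real (\<Sum>g\<in>G.
           (cmod (\<Sum>x\<in>configs {..<n} q. \<Sum>y\<in>configs {..<n} q. psi x * cnj (psi y) * of_real (w g x y)))\<^sup>2)"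
proof -
  let ?C = "configs {..<n} q"
  let ?v = "\<lambda>g. \<Sum>x\<in>?C. \<Sum>y\<in>?C. psi x * cnj (psi y) * of_real (w g x y)"
  have "quartic_form q n psi K = (\<Sum>x\<in>?C. \<Sum>y\<in>?C. \<Sum>x'\<in>?C. \<Sum>y'\<in>?C. \<Sum>g\<in>G.
      (psi x * cnj (psi y) * of_real (w g x y)) * cnj (psi x' * cnj (psi y') * of_real (w g x' y')))"
    unfolding quartic_form_def
    by (intro sum.cong refl) (simp add: K of_real_sum sum_distrib_left mult_ac)
  also have "\<dots> = (\<Sum>g\<in>G. \<Sum>x\<in>?C. \<Sum>y\<in>?C. \<Sum>x'\<in>?C. \<Sum>y'\<in>?C.
      (psi x * cnj (psi y) * of_real (w g x y)) * cnj (psi x' * cnj (psi y') * of_real (w g x' y')))"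
    by (simp only: sum.swap[where B = G])
  also have "\<dots> = (\<Sum>g\<in>G. \<Sum>x\<in>?C. \<Sum>x'\<in>?C. \<Sum>y\<in>?C. \<Sum>y'\<in>?C.
      (psi x * cnj (psi y) * of_real (w g x y)) * cnj (psi x' * cnj (psi y') * of_real (w g x' y')))"
    by (intro sum.cong refl sum.swap)
  also have "\<dots> = (\<Sum>g\<in>G. ?v g * cnj (?v g))"
    by (simp add: sum_product cnj_sum)
  also have "\<dots> = of_real (\<Sum>g\<in>G. (cmod (?v g))\<^sup>2)"
    unfolding of_real_sum complex_norm_square ..
  finally show ?thesis .
qed

section \<open>Purities and weights\<close>

definition purity :: "nat \<Rightarrow> nat \<Rightarrow> (config \<Rightarrow> complex) \<Rightarrow> nat set \<Rightarrow> real" where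
  "purity q n psi T = (\<Sum>a\<in>configs T q. \<Sum>b\<in>configs T q. (cmod (reduced_state q n psi T a b))\<^sup>2)"

definition purity_kernel :: "nat \<Rightarrow> nat set \<Rightarrow> kernel" where
  "purity_kernel n T x y x' y' =
     of_bool (\<forall>i<n. if i \<in> T then x i = x' i \<and> y i = y' i else x i = y i \<and> x' i = y' i)"

lemma purity_kernel_glue:
  assumes T: "T \<subseteq> {..<n}"
    and a: "a1 \<in> configs T q" "a2 \<in> configs T q" "a3 \<in> configs T q" "a4 \<in> configs T q"
    and c: "c1 \<in> configs ({..<n} - T) q" "c2 \<in> configs ({..<n} - T) q"
           "c3 \<in> configs ({..<n} - T) q" "c4 \<in> configs ({..<n} - T) q"
  shows "purity_kernel n T (glue T a1 c1) (glue T a2 c2) (glue T a3 c3) (glue T a4 c4)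
       = of_bool (a1 = a3 \<and> c1 = c2 \<and> a2 = a4 \<and> c3 = c4)"
proof -
  have split: "(\<forall>i<n. if i \<in> T then A i else B i) \<longleftrightarrow> (\<forall>i\<in>T. A i) \<and> (\<forall>i\<in>{..<n} - T. B i)" for A B
    using T by auto
  show ?thesis
    unfolding purity_kernel_def glue_def
    by (simp add: split ball_conj_distrib configs_eq_iff[OF a(1,3)] configs_eq_iff[OF a(2,4)]
        configs_eq_iff[OF c(1,2)] configs_eq_iff[OF c(3,4)])
qed

lemma purity_eq_quartic_form:
  assumes T: "T \<subseteq> {..<n}"
  shows "of_real (purity q n psi T) = quartic_form q n psi (purity_kernel n T)"
proof -
  let ?A = "configs T q" and ?B = "configs ({..<n} - T) q"
  have "finite T" using T finite_subset by blast
  then have fin: "finite ?A" "finite ?B" by simp_all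
  have "quartic_form q n psi (purity_kernel n T) =
      (\<Sum>a\<in>?A. \<Sum>c\<in>?B. \<Sum>b\<in>?A. \<Sum>c'\<in>?B.
         psi (glue T a c) * cnj (psi (glue T b c)) * cnj (psi (glue T a c')) * psi (glue T b c'))"
  proof -
    have delta: "z * of_real (of_bool (P1 \<and> P2 \<and> P3 \<and> P4)) =
        (if P1 then if P2 then if P3 then if P4 then z else 0 else 0 else 0 else 0)"
      for z :: complex and P1 P2 P3 P4
      by simp
    have sum_if: "(\<Sum>x\<in>A. if P then f x else 0) = (if P then sum f A else 0)" for A P and f :: "'a \<Rightarrow> complex"
      by simp
    show ?thesis
      unfolding quartic_form_glue[OF T] using fin
      by (simp add: purity_kernel_glue[OF T] delta sum_if sum.delta' cong: sum.cong)
  qed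
  also have "\<dots> = (\<Sum>a\<in>?A. \<Sum>b\<in>?A. reduced_state q n psi T a b * cnj (reduced_state q n psi T a b))"
    unfolding reduced_state_glue
    by (subst sum.swap) (simp add: sum_product cnj_sum mult_ac)
  also have "\<dots> = of_real (purity q n psi T)"
    unfolding purity_def of_real_sum complex_norm_square ..
  finally show ?thesis ..
qed

lemma purity_complement:
  assumes T: "T \<subseteq> {..<n}"
  shows "purity q n psi ({..<n} - T) = purity q n psi T"
proof -
  have "purity_kernel n ({..<n} - T) = (\<lambda>x y x' y'. purity_kernel n T x x' y y')"
  proof (intro ext)
    have "(\<forall>i<n. if i \<in> {..<n} - T then A i else B i) \<longleftrightarrow> (\<forall>i<n. if i \<in> T then B i else A i)" for A B
      by auto
    then show "purity_kernel n ({..<n} - T) x y x' y' = purity_kernel n T x x' y y'" for x y x' y'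
      unfolding purity_kernel_def by simp
  qed
  then have "quartic_form q n psi (purity_kernel n ({..<n} - T)) = quartic_form q n psi (purity_kernel n T)"
    using quartic_form_swap[of q n psi "purity_kernel n T"] by simp
  then have "complex_of_real (purity q n psi ({..<n} - T)) = of_real (purity q n psi T)"
    by (simp add: purity_eq_quartic_form[OF T] purity_eq_quartic_form[of "{..<n} - T"])
  then show ?thesis
    by simp
qed

lemma purity_kernel_eq_prod:
  "purity_kernel n T x y x' y' = (\<Prod>i<n.
     if i \<in> T then of_bool (x i = x' i \<and> y i = y' i) else of_bool (x i = y i \<and> x' i = y' i))"
proof -
  have "(\<Prod>i<n. if i \<in> T then of_bool (x i = x' i \<and> y i = y' i) else of_bool (x i = y i \<and> x' i = y' i))
      = (\<Prod>i<n. of_bool (if i \<in> T then x i = x' i \<and> y i = y' i else x i = y i \<and> x' i = y' i) :: real)"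
    by (intro prod.cong) auto
  then show ?thesis
    unfolding purity_kernel_def by (simp only: prod_of_bool[OF finite_lessThan] Ball_def lessThan_iff)
qed

definition weight_kernel :: "nat \<Rightarrow> nat \<Rightarrow> nat set \<Rightarrow> kernel" where
  "weight_kernel q n S x y x' y' = (\<Prod>i<n.
     if i \<in> S then real q * of_bool (x i = x' i \<and> y i = y' i) - of_bool (x i = y i \<and> x' i = y' i)
     else of_bool (x i = y i \<and> x' i = y' i))"

lemma weight_kernel_expand:
  assumes "S \<subseteq> {..<n}"
  shows "weight_kernel q n S x y x' y'
       = (\<Sum>T\<in>Pow S. (-1) ^ card (S - T) * real q ^ card T * purity_kernel n T x y x' y')"
  unfolding weight_kernel_def purity_kernel_eq_prod
  using assms
  by (simp add: prod_if_diff_eq_sum mult.assoc)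
     (intro sum.cong refl, use assms in \<open>auto simp: prod_if_scale\<close>)

text \<open>traceless_coord q a b is sqrt q times the traceless part of the matrix unit |a><b|, written
  in the basis of matrix units |e1><e2|; trace_coord a b records the trace of |a><b| in the single
  coordinate (0, 0). They are Gram vectors of the two site factors of weight_kernel, which makes
  weight_kernel positive semidefinite.\<close>
definition traceless_coord :: "nat \<Rightarrow> nat \<Rightarrow> nat \<Rightarrow> nat \<times> nat \<Rightarrow> real" where
  "traceless_coord q a b e = sqrt (real q) * (of_bool ((a, b) = e) - of_bool (a = b \<and> fst e = snd e) / real q)"

definition trace_coord :: "nat \<Rightarrow> nat \<Rightarrow> nat \<times> nat \<Rightarrow> real" where
  "trace_coord a b e = of_bool (a = b \<and> e = (0, 0))"

lemma traceless_coord_gram: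
  assumes q: "q > 0" and lt: "a < q" "b < q" "a' < q" "b' < q"
  shows "(\<Sum>e\<in>{..<q} \<times> {..<q}. traceless_coord q a b e * traceless_coord q a' b' e)
       = real q * of_bool (a = a' \<and> b = b') - of_bool (a = b \<and> a' = b')"
proof -
  let ?E = "{..<q} \<times> {..<q}"
  let ?u = "\<lambda>a b e. of_bool ((a, b) = e) :: real"
  let ?d = "\<lambda>a b e. of_bool (a = b \<and> fst e = snd e) :: real"
  have unit: "(\<Sum>e\<in>?E. ?u a b e * f e) = f (a, b)" if "a < q" "b < q" for a b f
  proof -
    have "?E \<inter> {e. (a, b) = e} = {(a, b)}" using that by auto
    then show ?thesis by simp
  qed
  have diag: "(\<Sum>e\<in>?E. ?d a b e * ?d a' b' e) = of_bool (a = b \<and> a' = b') * real q"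
  proof -
    have "?E \<inter> {e. fst e = snd e} = (\<lambda>c. (c, c)) ` {..<q}" by auto
    then show ?thesis by (simp add: card_image inj_on_def Int_def conj_commute)
  qed
  have "traceless_coord q a b e * traceless_coord q a' b' e
      = real q * (?u a b e * ?u a' b' e) - ?u a b e * ?d a' b' e - ?u a' b' e * ?d a b e
        + ?d a b e * ?d a' b' e / real q" for e
  proof -
    have "traceless_coord q a b e * traceless_coord q a' b' e
        = (sqrt (real q) * sqrt (real q))
          * ((?u a b e - ?d a b e / real q) * (?u a' b' e - ?d a' b' e / real q))"
      unfolding traceless_coord_def by (simp only: mult_ac)
    moreover have "Q * ((u - d / Q) * (u' - d' / Q)) = Q * (u * u') - u * d' - u' * d + d * d' / Q"
      if "Q > 0" for Q u u' d d' :: real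
      using that by (simp add: field_simps)
    ultimately show ?thesis
      using q by simp
  qed
  then have "(\<Sum>e\<in>?E. traceless_coord q a b e * traceless_coord q a' b' e)
      = real q * (\<Sum>e\<in>?E. ?u a b e * ?u a' b' e) - (\<Sum>e\<in>?E. ?u a b e * ?d a' b' e)
        - (\<Sum>e\<in>?E. ?u a' b' e * ?d a b e) + (\<Sum>e\<in>?E. ?d a b e * ?d a' b' e) / real q"
    by (simp only: sum.distrib sum_subtractf sum_divide_distrib sum_distrib_left)
  also have "\<dots> = real q * of_bool (a = a' \<and> b = b') - of_bool (a = b \<and> a' = b')"
    using q by (simp only: unit lt diag) auto
  finally show ?thesis .
qed

lemma trace_coord_gram:
  assumes "q > 0"
  shows "(\<Sum>e\<in>{..<q} \<times> {..<q}. trace_coord a b e * trace_coord a' b' e) = of_bool (a = b \<and> a' = b')"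
proof -
  have "trace_coord a b e * trace_coord a' b' e = of_bool (a = b \<and> a' = b') * of_bool (e = (0, 0))" for e
    by (auto simp: trace_coord_def)
  moreover have "{..<q} \<times> {..<q} \<inter> {e. e = (0, 0)} = {(0, 0)}"
    using assms by auto
  ultimately show ?thesis
    by (simp only: sum_distrib_left[symmetric] sum_of_bool_eq finite_SigmaI finite_lessThan) simp
qed

definition basis_coord :: "nat \<Rightarrow> nat \<Rightarrow> nat set \<Rightarrow> (nat \<Rightarrow> nat \<times> nat) \<Rightarrow> config \<Rightarrow> config \<Rightarrow> real" where
  "basis_coord q n S g x y = (\<Prod>i<n.
     if i \<in> S then traceless_coord q (x i) (y i) (g i) else trace_coord (x i) (y i) (g i))"

lemma weight_kernel_gram:
  assumes q: "q > 0"
    and cfg: "x \<in> configs {..<n} q" "y \<in> configs {..<n} q" "x' \<in> configs {..<n} q" "y' \<in> configs {..<n} q"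
  shows "weight_kernel q n S x y x' y'
       = (\<Sum>g\<in>PiE {..<n} (\<lambda>_. {..<q} \<times> {..<q}). basis_coord q n S g x y * basis_coord q n S g x' y')"
proof -
  have "weight_kernel q n S x y x' y' = (\<Prod>i<n. \<Sum>e\<in>{..<q} \<times> {..<q}.
      (if i \<in> S then traceless_coord q (x i) (y i) e else trace_coord (x i) (y i) e)
      * (if i \<in> S then traceless_coord q (x' i) (y' i) e else trace_coord (x' i) (y' i) e))"
    unfolding weight_kernel_def
  proof (intro prod.cong refl)
    fix i assume "i \<in> {..<n}"
    then have "x i < q" "y i < q" "x' i < q" "y' i < q"
      using cfg configs_less by blast+
    then show "(if i \<in> S then real q * of_bool (x i = x' i \<and> y i = y' i) - of_bool (x i = y i \<and> x' i = y' i)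
        else of_bool (x i = y i \<and> x' i = y' i)) = (\<Sum>e\<in>{..<q} \<times> {..<q}.
        (if i \<in> S then traceless_coord q (x i) (y i) e else trace_coord (x i) (y i) e)
        * (if i \<in> S then traceless_coord q (x' i) (y' i) e else trace_coord (x' i) (y' i) e))"
      using traceless_coord_gram[OF q] trace_coord_gram[OF q] by simp
  qed
  also have "\<dots> = (\<Sum>g\<in>PiE {..<n} (\<lambda>_. {..<q} \<times> {..<q}). basis_coord q n S g x y * basis_coord q n S g x' y')"
    unfolding basis_coord_def prod.distrib[symmetric]
    by (rule prod_sum_PiE) auto
  finally show ?thesis .
qed

definition weight :: "nat \<Rightarrow> nat \<Rightarrow> (config \<Rightarrow> complex) \<Rightarrow> nat set \<Rightarrow> real" where
  "weight q n psi S = (\<Sum>T\<in>Pow S. (-1) ^ card (S - T) * real q ^ card T * purity q n psi T)"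

lemma weight_eq_quartic_form:
  assumes S: "S \<subseteq> {..<n}"
  shows "of_real (weight q n psi S) = quartic_form q n psi (weight_kernel q n S)"
proof -
  have "finite S" using S finite_subset by blast
  have "quartic_form q n psi (weight_kernel q n S) = quartic_form q n psi
      (\<lambda>x y x' y'. \<Sum>T\<in>Pow S. ((-1) ^ card (S - T) * real q ^ card T) * purity_kernel n T x y x' y')"
    by (intro arg_cong[where f = "quartic_form q n psi"] ext) (simp add: weight_kernel_expand[OF S])
  also have "\<dots> = (\<Sum>T\<in>Pow S.
      of_real ((-1) ^ card (S - T) * real q ^ card T) * quartic_form q n psi (purity_kernel n T))"
    using \<open>finite S\<close> by (simp add: quartic_form_sum)
  also have "\<dots> = of_real (weight q n psi S)"
    unfolding weight_def of_real_sum
    by (intro sum.cong refl) (use S in \<open>auto simp: purity_eq_quartic_form\<close>)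
  finally show ?thesis ..
qed

lemma weight_nonneg:
  assumes "q > 0" "S \<subseteq> {..<n}"
  shows "weight q n psi S \<ge> 0"
proof -
  have "complex_of_real (weight q n psi S) = of_real (\<Sum>g\<in>PiE {..<n} (\<lambda>_. {..<q} \<times> {..<q}).
      (cmod (\<Sum>x\<in>configs {..<n} q. \<Sum>y\<in>configs {..<n} q.
         psi x * cnj (psi y) * of_real (basis_coord q n S g x y)))\<^sup>2)"
    unfolding weight_eq_quartic_form[OF assms(2)]
    by (rule quartic_form_gram) (auto simp: weight_kernel_gram[OF assms(1)] intro: finite_PiE)
  then show ?thesis
    by (simp only: of_real_eq_iff) (simp add: sum_nonneg)
qed

lemma sum_weight:
  assumes "finite S"
  shows "(\<Sum>T\<in>Pow S. weight q n psi T) = real q ^ card S * purity q n psi S"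
proof -
  have "(-1) ^ card S * weight q n psi S = (\<Sum>T\<in>Pow S. (-1) ^ card T * (real q ^ card T * purity q n psi T))"
    if "finite S" for S
  proof -
    have "(-1) ^ card S * (-1) ^ card (S - T) = ((-1) ^ card T :: real)" if "T \<in> Pow S" for T
    proof -
      have "card T \<le> card S" "card (S - T) = card S - card T"
        using that \<open>finite S\<close> by (auto simp: card_mono card_Diff_subset finite_subset)
      then have "card S + card (S - T) = card T + 2 * (card S - card T)"
        by simp
      then have "(-1) ^ card S * (-1) ^ card (S - T) = ((-1) ^ (card T + 2 * (card S - card T)) :: real)"
        by (simp only: flip: power_add)
      then show ?thesis
        by (simp add: power_add power_mult)
    qed
    then show ?thesis
      unfolding weight_def sum_distrib_left by (intro sum.cong refl) (simp flip: mult.assoc)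
  qed
  then have "real q ^ card S * purity q n psi S
      = (\<Sum>T\<in>Pow S. (-1) ^ card T * ((-1) ^ card T * weight q n psi T))"
    by (rule inclusion_exclusion_symmetric[OF _ assms])
  then show ?thesis
    by (simp add: mult.assoc[symmetric] flip: power_add)
qed

section \<open>Uniform states\<close>

lemma k_uniform_reduced_state:
  assumes psi: "k_uniform q n k psi" and "k \<le> n" "q > 0"
    and U: "U \<subseteq> {..<n}" "card U \<le> k" and a: "a \<in> configs U q" and b: "b \<in> configs U q"
  shows "reduced_state q n psi U a b = (if a = b then 1 / of_nat q ^ card U else 0)"
proof -
  have "finite U" using U finite_subset by blast
  then have "k - card U \<le> card ({..<n} - U)"
    using U assms(2) by (simp add: card_Diff_subset)
  then obtain D where D: "D \<subseteq> {..<n} - U" "card D = k - card U"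
    by (meson obtain_subset_with_card_n)
  have "finite D" using D(1) finite_subset by blast
  define T where "T = U \<union> D"
  have UT: "U \<subseteq> T" and T: "T \<subseteq> {..<n}" "T - U = D"
    using D U by (auto simp: T_def)
  have "card T = k"
    unfolding T_def using D \<open>finite U\<close> \<open>finite D\<close> U(2) by (subst card_Un_disjoint) auto
  then have rho_T: "reduced_state q n psi T a' b' = (if a' = b' then 1 / of_nat q ^ k else 0)"
    if "a' \<in> configs T q" "b' \<in> configs T q" for a' b'
    using psi T that unfolding k_uniform_def by blast
  have "reduced_state q n psi U a b = (\<Sum>d\<in>configs D q. if a = b then 1 / of_nat q ^ k else 0)"
    unfolding reduced_state_partial_trace[OF UT T(1)] T(2)
  proof (intro sum.cong refl)
    fix d assume d: "d \<in> configs D q"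
    then have "glue U a d \<in> configs T q" "glue U b d \<in> configs T q"
      using glue_in_configs[OF UT] a b T(2) by auto
    moreover have "glue U a d = glue U b d \<longleftrightarrow> a = b"
      using glue_eq_glue_iff[OF a b d d] D(1) by auto
    ultimately show "reduced_state q n psi T (glue U a d) (glue U b d)
        = (if a = b then 1 / of_nat q ^ k else 0)"
      using rho_T by simp
  qed
  also have "\<dots> = (if a = b then of_nat q ^ (k - card U) / of_nat q ^ k else 0)"
    using \<open>finite D\<close> by (simp add: card_configs D(2))
  also have "\<dots> = (if a = b then 1 / of_nat q ^ card U else 0)"
    using \<open>q > 0\<close> U(2) by (simp add: power_diff)
  finally show ?thesis .
qed

lemma k_uniform_purity:
  assumes "k_uniform q n k psi" "k \<le> n" "q > 0" "U \<subseteq> {..<n}" "card U \<le> k"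
  shows "real q ^ card U * purity q n psi U = 1"
proof -
  have "finite U" using assms(4) finite_subset by blast
  have "purity q n psi U = (\<Sum>a\<in>configs U q. \<Sum>b\<in>configs U q. if a = b then (1 / real q ^ card U)\<^sup>2 else 0)"
    unfolding purity_def
    by (intro sum.cong refl) (simp add: k_uniform_reduced_state[OF assms] norm_divide norm_power)
  also have "\<dots> = real q ^ card U * (1 / real q ^ card U)\<^sup>2"
    using \<open>finite U\<close> by (simp add: card_configs)
  finally show ?thesis
    using assms(3) by (simp add: power2_eq_square)
qed

lemma k_uniform_weight_empty:
  assumes "k_uniform q n k psi" "k \<le> n" "q > 0"
  shows "weight q n psi {} = 1"
  using k_uniform_purity[OF assms, of "{}"] by (simp add: weight_def)

lemma k_uniform_weight_eq_0:
  assumes "k_uniform q n k psi" "k \<le> n" "q > 0" "T \<subseteq> {..<n}" "card T \<le> k" "T \<noteq> {}"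
  shows "weight q n psi T = 0"
proof -
  have "finite T" using assms(4) finite_subset by blast
  have "weight q n psi T = (\<Sum>X\<in>Pow T. (\<Prod>i\<in>X. 1) * (\<Prod>i\<in>T - X. - 1 :: real))"
    unfolding weight_def
  proof (intro sum.cong refl)
    fix X assume "X \<in> Pow T"
    then have "X \<subseteq> {..<n}" "card X \<le> k"
      using assms(4,5) \<open>finite T\<close> card_mono[of T X] by auto
    then show "(-1) ^ card (T - X) * real q ^ card X * purity q n psi X = (\<Prod>i\<in>X. 1) * (\<Prod>i\<in>T - X. - 1)"
      using k_uniform_purity[OF assms(1-3)] by (simp add: mult.assoc)
  qed
  also have "\<dots> = (\<Prod>i\<in>T. 1 + - 1 :: real)"
    by (rule prod_add[OF \<open>finite T\<close>, symmetric])
  also have "\<dots> = 0"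
    using \<open>finite T\<close> assms(6) by (simp add: card_gt_0_iff)
  finally show ?thesis .
qed

section \<open>The linear programming bound\<close>

definition supersets_count :: "nat \<Rightarrow> nat \<Rightarrow> nat \<Rightarrow> nat" where
  "supersets_count n t s = (if t \<le> s then (n - t) choose (s - t) else 0)"

lemma card_supersets:
  assumes T: "T \<subseteq> {..<n}"
  shows "card {S. S \<subseteq> {..<n} \<and> card S = s \<and> T \<subseteq> S} = supersets_count n (card T) s"
proof (cases "card T \<le> s")
  case False
  then have "{S. S \<subseteq> {..<n} \<and> card S = s \<and> T \<subseteq> S} = {}"
    using card_mono[OF finite_subset] by fastforce
  then show ?thesis
    using False by (simp add: supersets_count_def)
next
  case True
  have "finite T" using T finite_subset by blast
  have "bij_betw (\<lambda>S. S - T) {S. S \<subseteq> {..<n} \<and> card S = s \<and> T \<subseteq> S} {U. U \<subseteq> {..<n} - T \<and> card U = s - card T}"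
  proof (rule bij_betw_byWitness[where f' = "\<lambda>U. U \<union> T"])
    show "(\<lambda>U. U \<union> T) ` {U. U \<subseteq> {..<n} - T \<and> card U = s - card T} \<subseteq> {S. S \<subseteq> {..<n} \<and> card S = s \<and> T \<subseteq> S}"
    proof clarify
      fix U assume U: "U \<subseteq> {..<n} - T" "card U = s - card T"
      then have "finite U" using finite_subset by blast
      then show "U \<union> T \<subseteq> {..<n} \<and> card (U \<union> T) = s \<and> T \<subseteq> U \<union> T"
        using U T True \<open>finite T\<close> by (subst card_Un_disjoint) auto
    qed
  qed (use \<open>finite T\<close> in \<open>auto simp: card_Diff_subset\<close>)
  then have "card {S. S \<subseteq> {..<n} \<and> card S = s \<and> T \<subseteq> S} = card ({..<n} - T) choose (s - card T)"
    by (simp add: bij_betw_same_card n_subsets)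
  then show ?thesis
    using True T \<open>finite T\<close> by (simp add: supersets_count_def card_Diff_subset)
qed

lemma sum_purity_card:
  "real q ^ s * (\<Sum>S | S \<subseteq> {..<n} \<and> card S = s. purity q n psi S)
     = (\<Sum>T\<in>Pow {..<n}. weight q n psi T * real (supersets_count n (card T) s))"
proof -
  let ?F = "{S. S \<subseteq> {..<n} \<and> card S = s}"
  have "finite ?F" by (rule finite_subset[of _ "Pow {..<n}"]) auto
  have "real q ^ s * (\<Sum>S\<in>?F. purity q n psi S) = (\<Sum>S\<in>?F. \<Sum>T\<in>Pow S. weight q n psi T)"
    unfolding sum_distrib_left by (intro sum.cong refl) (auto simp: sum_weight finite_subset)
  also have "\<dots> = (\<Sum>S\<in>?F. \<Sum>T\<in>Pow {..<n}. if T \<subseteq> S then weight q n psi T else 0)"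
  proof (rule sum.cong[OF refl])
    fix S assume "S \<in> ?F"
    then have "{T \<in> Pow {..<n}. T \<subseteq> S} = Pow S" by auto
    then show "(\<Sum>T\<in>Pow S. weight q n psi T) = (\<Sum>T\<in>Pow {..<n}. if T \<subseteq> S then weight q n psi T else 0)"
      using sum.inter_filter[of "Pow {..<n}" "weight q n psi" "\<lambda>T. T \<subseteq> S"] by simp
  qed
  also have "\<dots> = (\<Sum>T\<in>Pow {..<n}. weight q n psi T * real (card {S \<in> ?F. T \<subseteq> S}))"
    using \<open>finite ?F\<close> by (subst sum.swap) (simp add: sum.If_cases Int_def mult.commute)
  also have "\<dots> = (\<Sum>T\<in>Pow {..<n}. weight q n psi T * real (supersets_count n (card T) s))"
    by (intro sum.cong refl) (simp add: card_supersets conj_assoc)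
  finally show ?thesis .
qed

lemma sum_purity_card_complement:
  assumes "s \<le> n"
  shows "(\<Sum>S | S \<subseteq> {..<n} \<and> card S = n - s. purity q n psi S)
       = (\<Sum>S | S \<subseteq> {..<n} \<and> card S = s. purity q n psi S)"
proof (rule sum.reindex_bij_witness[where i = "\<lambda>S. {..<n} - S" and j = "\<lambda>S. {..<n} - S"])
  fix S assume S: "S \<in> {S. S \<subseteq> {..<n} \<and> card S = s}"
  then have "finite S" using finite_subset by blast
  with S assms show "{..<n} - S \<in> {S. S \<subseteq> {..<n} \<and> card S = n - s}"
    by (simp add: card_Diff_subset)
next
  fix S assume S: "S \<in> {S. S \<subseteq> {..<n} \<and> card S = n - s}"
  then have "finite S" using finite_subset by blast
  with S assms show "{..<n} - S \<in> {S. S \<subseteq> {..<n} \<and> card S = s}"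
    by (simp add: card_Diff_subset)
  from S show "purity q n psi ({..<n} - S) = purity q n psi S"
    by (simp add: purity_complement)
qed auto

lemma supersets_count_complement:
  assumes "t \<le> n" "s \<le> n"
  shows "supersets_count n t (n - s) = (n - t) choose s"
proof (cases "t \<le> n - s")
  case True
  then have "(n - t) choose (n - s - t) = (n - t) choose ((n - t) - (n - s - t))"
    by (intro binomial_symmetric) simp
  also have "(n - t) - (n - s - t) = s"
    using True assms by simp
  finally show ?thesis
    using True by (simp add: supersets_count_def)
next
  case False
  then show ?thesis
    using assms by (simp add: supersets_count_def binomial_eq_0)
qed

lemma weight_identity:
  assumes "2 * s \<le> n"
  shows "(\<Sum>T\<in>Pow {..<n}. weight q n psi T * real ((n - card T) choose s))
       = real q ^ (n - 2 * s) * (\<Sum>T\<in>Pow {..<n}. weight q n psi T * real (supersets_count n (card T) s))"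
proof -
  have "(\<Sum>T\<in>Pow {..<n}. weight q n psi T * real ((n - card T) choose s))
      = (\<Sum>T\<in>Pow {..<n}. weight q n psi T * real (supersets_count n (card T) (n - s)))"
    using assms
    by (intro sum.cong refl) (auto simp: supersets_count_complement card_mono[of "{..<n}", simplified])
  also have "\<dots> = real q ^ (n - s) * (\<Sum>S | S \<subseteq> {..<n} \<and> card S = s. purity q n psi S)"
    using assms by (simp add: sum_purity_card[symmetric] sum_purity_card_complement)
  also have "\<dots> = real q ^ (n - 2 * s) * (real q ^ s * (\<Sum>S | S \<subseteq> {..<n} \<and> card S = s. purity q n psi S))"
    using assms by (simp add: mult.assoc flip: power_add)
  also have "\<dots> = real q ^ (n - 2 * s)
      * (\<Sum>T\<in>Pow {..<n}. weight q n psi T * real (supersets_count n (card T) s))"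
    by (simp only: sum_purity_card)
  finally show ?thesis .
qed

lemma weight_distribution_bound:
  fixes A :: "nat set \<Rightarrow> real" and Q lam :: real
  assumes nonneg: "\<And>T. T \<subseteq> {..<n} \<Longrightarrow> A T \<ge> 0"
    and empty: "A {} = 1"
    and zero: "\<And>T. T \<subseteq> {..<n} \<Longrightarrow> T \<noteq> {} \<Longrightarrow> card T \<le> k \<Longrightarrow> A T = 0"
    and identity: "\<And>s. 2 * s \<le> n \<Longrightarrow> (\<Sum>T\<in>Pow {..<n}. A T * real ((n - card T) choose s))
                     = Q ^ (n - 2 * s) * (\<Sum>T\<in>Pow {..<n}. A T * real (supersets_count n (card T) s))"
    and ks: "k \<le> s" "2 * s \<le> n" and "Q \<ge> 0"
    and binomial: "\<And>t. k < t \<Longrightarrow> t \<le> n \<Longrightarrow> real ((n - t) choose s) \<le> lam * real ((n - t) choose k)"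
  shows "real (n choose s) * (Q ^ (n - 2 * s) - 1) \<le> lam * real (n choose k) * (Q ^ (n - 2 * k) - 1)"
proof -
  define c where "c (T :: nat set) = real ((n - card T) choose s)
      - Q ^ (n - 2 * s) * real (supersets_count n (card T) s)
      - lam * (real ((n - card T) choose k) - Q ^ (n - 2 * k) * real (supersets_count n (card T) k))" for T
  have total: "(\<Sum>T\<in>Pow {..<n}. A T * c T) = 0"
    using identity[of s] arg_cong[where f = "\<lambda>x. lam * x", OF identity[of k]] ks unfolding c_def
    by (simp add: algebra_simps sum.distrib sum_subtractf sum_distrib_left)
  have "(\<Sum>T\<in>Pow {..<n} - {{}}. A T * c T) \<le> 0"
  proof (rule sum_nonpos)
    fix T assume "T \<in> Pow {..<n} - {{}}"
    then have T: "T \<subseteq> {..<n}" "T \<noteq> {}" by auto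
    then have "card T \<le> n" using card_mono[of "{..<n}" T] by simp
    show "A T * c T \<le> 0"
    proof (cases "card T \<le> k")
      case True
      then show ?thesis using zero[OF T] by simp
    next
      case False
      then have "c T = (real ((n - card T) choose s) - lam * real ((n - card T) choose k))
          - Q ^ (n - 2 * s) * real (supersets_count n (card T) s)"
        unfolding c_def by (simp add: supersets_count_def)
      also have "\<dots> \<le> 0"
      proof -
        have "0 \<le> Q ^ (n - 2 * s) * real (supersets_count n (card T) s)"
          using \<open>Q \<ge> 0\<close> by simp
        then show ?thesis
          using binomial[of "card T"] False \<open>card T \<le> n\<close> by linarith
      qed
      finally show ?thesis
        using nonneg[OF T(1)] by (simp add: mult_nonneg_nonpos)
    qed
  qed
  moreover have "(\<Sum>T\<in>Pow {..<n}. A T * c T) = A {} * c {} + (\<Sum>T\<in>Pow {..<n} - {{}}. A T * c T)"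
    by (rule sum.remove) auto
  ultimately have "c {} \<ge> 0"
    using total empty by simp
  moreover have "c {} = real (n choose s) - Q ^ (n - 2 * s) * real (n choose s)
      - lam * (real (n choose k) - Q ^ (n - 2 * k) * real (n choose k))"
    unfolding c_def by (simp add: supersets_count_def)
  ultimately show ?thesis
    by (simp add: algebra_simps)
qed

lemma choose_mult_choose_le:
  assumes "k \<le> s" "N \<le> s + u"
  shows "(s choose (s - k)) * (N choose s) \<le> ((u + (s - k)) choose (s - k)) * (N choose k)"
proof (cases "s \<le> N")
  case True
  have "(N choose s) * (s choose k) = (N choose k) * ((N - k) choose (s - k))"
    using True assms(1) by (intro choose_mult) auto
  moreover have "(N - k) choose (s - k) \<le> (u + (s - k)) choose (s - k)"
    using assms by (intro binomial_right_mono) auto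
  ultimately show ?thesis
    using binomial_symmetric[OF assms(1)] by (metis mult.commute mult_le_mono2)
qed (simp add: binomial_eq_0)

lemma k_uniform_choose_bound:
  assumes psi: "k_uniform q n k psi" and "q > 0" "k \<le> s" "2 * s \<le> n" "n \<le> s + k + u + 1"
  shows "real (s choose (s - k)) * real (n choose s) * (real q ^ (n - 2 * s) - 1)
       \<le> real ((u + (s - k)) choose (s - k)) * real (n choose k) * (real q ^ (n - 2 * k) - 1)"
proof -
  define lam where "lam = real ((u + (s - k)) choose (s - k)) / real (s choose (s - k))"
  have pos: "real (s choose (s - k)) > 0" by simp
  have "real (n choose s) * (real q ^ (n - 2 * s) - 1) \<le> lam * real (n choose k) * (real q ^ (n - 2 * k) - 1)"
  proof (rule weight_distribution_bound[where A = "weight q n psi"])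
    have "k \<le> n" using assms by simp
    then show "weight q n psi {} = 1"
      "\<And>T. T \<subseteq> {..<n} \<Longrightarrow> T \<noteq> {} \<Longrightarrow> card T \<le> k \<Longrightarrow> weight q n psi T = 0"
      using k_uniform_weight_empty k_uniform_weight_eq_0 psi \<open>q > 0\<close> by blast+
  next
    fix t assume "k < t" "t \<le> n"
    then have "real (s choose (s - k)) * real ((n - t) choose s)
        \<le> real ((u + (s - k)) choose (s - k)) * real ((n - t) choose k)"
      using choose_mult_choose_le[of k s "n - t" u] assms by (simp flip: of_nat_mult)
    then show "real ((n - t) choose s) \<le> lam * real ((n - t) choose k)"
      using pos by (simp add: lam_def field_simps)
  qed (use assms weight_nonneg weight_identity in auto)
  then show ?thesis
    using pos by (simp add: lam_def field_simps)
qed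

lemma fact_quotient_mono:
  assumes "a \<le> b"
  shows "fact (a + c) / fact a \<le> (fact (b + c) / fact b :: real)"
proof -
  have "fact (a + c) * fact b \<le> (fact (b + c) * fact a :: nat)"
  proof (induction c)
    case (Suc c)
    have "fact (a + Suc c) * fact b = (a + c + 1) * (fact (a + c) * fact b)"
      by (simp add: algebra_simps)
    also have "\<dots> \<le> (b + c + 1) * (fact (b + c) * fact a)"
      by (rule mult_le_mono[OF _ Suc.IH]) (use assms in simp)
    also have "\<dots> = fact (b + Suc c) * fact a"
      by (simp add: algebra_simps)
    finally show ?case .
  qed (simp add: mult.commute)
  then have "real (fact (a + c) * fact b) \<le> real (fact (b + c) * fact a)"
    by (simp only: of_nat_le_iff)
  then have "fact (a + c) * fact b \<le> (fact (b + c) * fact a :: real)"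
    by (simp only: of_nat_mult of_nat_fact)
  then show ?thesis
    by (simp add: field_simps)
qed

lemma one_le_power_diff_one_quotient:
  fixes x :: real
  assumes "x > 1" "0 < j" "j \<le> i"
  shows "1 \<le> (x ^ i - 1) / (x ^ j - 1)"
proof -
  have "1 < x ^ j" using assms by simp
  moreover have "x ^ j \<le> x ^ i" using assms by (intro power_increasing) auto
  ultimately show ?thesis by simp
qed

lemma le_quotient_mult_of_proportional:
  fixes a c d e r l :: real
  assumes "a * l = c * r" "a * d \<le> c * e" "c > 0" "d > 0" "l \<ge> 0"
  shows "r \<le> e / d * l"
proof -
  have "c * (r * d) = l * (a * d)" using assms(1) by (simp add: algebra_simps)
  also have "\<dots> \<le> l * (c * e)" using assms(2,5) by (rule mult_left_mono)
  finally have "r * d \<le> l * e" using assms(3) by (simp add: algebra_simps)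
  then show ?thesis using assms(4) by (simp add: field_simps)
qed

lemma binomial_fact_eq:
  "k \<le> n \<Longrightarrow> n - k = j \<Longrightarrow> real (n choose k) = fact n / (fact k * fact j)"
  using binomial_fact[of k n] by simp

lemma choose_even_identity:
  assumes "1 \<le> l" "l \<le> m"
  shows "real ((m - 1) choose (l - 1)) * real ((2 * m) choose (m - 1)) * (fact (2 * l - 1) / fact l)
       = real ((2 * l - 1) choose (l - 1)) * real ((2 * m) choose (m - l)) * (fact (m + l) / fact (m + 1))"
proof -
  have b1: "real ((m - 1) choose (l - 1)) = fact (m - 1) / (fact (l - 1) * fact (m - l))"
    by (rule binomial_fact_eq) (use assms in auto)
  have b2: "real ((2 * m) choose (m - 1)) = fact (2 * m) / (fact (m - 1) * fact (m + 1))"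
    by (rule binomial_fact_eq) (use assms in auto)
  have b3: "real ((2 * l - 1) choose (l - 1)) = fact (2 * l - 1) / (fact (l - 1) * fact l)"
    by (rule binomial_fact_eq) (use assms in auto)
  have b4: "real ((2 * m) choose (m - l)) = fact (2 * m) / (fact (m - l) * fact (m + l))"
    by (rule binomial_fact_eq) (use assms in auto)
  show ?thesis
    unfolding b1 b2 b3 b4 by (simp add: mult_ac)
qed

lemma choose_odd_identity:
  assumes "l \<le> m"
  shows "real (m choose l) * real ((2 * m + 1) choose m) * (fact (2 * l) / fact l)
       = real ((2 * l) choose l) * real ((2 * m + 1) choose (m - l)) * (fact (m + l + 1) / fact (m + 1))"
proof -
  have b1: "real (m choose l) = fact m / (fact l * fact (m - l))"
    by (rule binomial_fact_eq) (use assms in auto)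
  have b2: "real ((2 * m + 1) choose m) = fact (2 * m + 1) / (fact m * fact (m + 1))"
    by (rule binomial_fact_eq) auto
  have b3: "real ((2 * l) choose l) = fact (2 * l) / (fact l * fact l)"
    by (rule binomial_fact_eq) auto
  have b4: "real ((2 * m + 1) choose (m - l)) = fact (2 * m + 1) / (fact (m - l) * fact (m + l + 1))"
    by (rule binomial_fact_eq) (use assms in auto)
  show ?thesis
    unfolding b1 b2 b3 b4 by (simp add: mult_ac)
qed

lemma no_AME_defect_even:
  fixes q n l m :: nat
  assumes q: "q \<ge> 2" and l: "l \<ge> 2" and n: "n = 2 * m"
    and H: "fact (m + l) / fact (m + 1) >
            ((real q) ^ (2 * l) - 1) / ((real q)\<^sup>2 - 1) * (fact (2 * l - 1) / fact l)"
  shows "\<not> AME_defect q n l psi"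
proof
  assume "AME_defect q n l psi"
  then have psi: "k_uniform q n (m - l) psi"
    using n by (simp add: AME_defect_def)
  have "(real q)\<^sup>2 > 1"
    using q by (simp add: less_1_mult power2_eq_square)
  show False
  proof (cases "l \<le> m")
    case True
    have "(m - 1) - (m - l) = l - 1" "l + (l - 1) = 2 * l - 1" "n - 2 * (m - 1) = 2" "n - 2 * (m - l) = 2 * l"
      using True l n by auto
    then have "real ((m - 1) choose (l - 1)) * real ((2 * m) choose (m - 1)) * ((real q)\<^sup>2 - 1)
        \<le> real ((2 * l - 1) choose (l - 1)) * real ((2 * m) choose (m - l)) * (real q ^ (2 * l) - 1)"
      using k_uniform_choose_bound[OF psi, of "m - 1" l] q True l n by simp
    then have "fact (m + l) / fact (m + 1)
        \<le> ((real q) ^ (2 * l) - 1) / ((real q)\<^sup>2 - 1) * (fact (2 * l - 1) / fact l)"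
      using \<open>(real q)\<^sup>2 > 1\<close> True l
      by (intro le_quotient_mult_of_proportional[OF choose_even_identity]) auto
    with H show False by simp
  next
    case False
    txt \<open>Then n div 2 - l truncates to 0, k-uniformity is vacuous, and it is the hypothesis H
      that fails.\<close>
    have "fact (m + l) / fact (m + 1) \<le> (fact (2 * l - 1) / fact l :: real)"
      using fact_quotient_mono[of "m + 1" l "l - 1"] False l by (simp add: mult_2)
    also have "\<dots> \<le> ((real q) ^ (2 * l) - 1) / ((real q)\<^sup>2 - 1) * (fact (2 * l - 1) / fact l)"
      using mult_right_mono[OF one_le_power_diff_one_quotient[of "real q" 2 "2 * l"],
          of "fact (2 * l - 1) / fact l"] q l
      by simp
    finally show False using H by simp
  qed
qed

lemma no_AME_defect_odd:
  fixes q n l m :: nat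
  assumes q: "q \<ge> 2" and l: "l \<ge> 1" and n: "n = 2 * m + 1"
    and H: "fact (m + l + 1) / fact (m + 1) >
            ((real q) ^ (2 * l + 1) - 1) / (real q - 1) * (fact (2 * l) / fact l)"
  shows "\<not> AME_defect q n l psi"
proof
  assume "AME_defect q n l psi"
  then have psi: "k_uniform q n (m - l) psi"
    using n by (simp add: AME_defect_def)
  show False
  proof (cases "l \<le> m")
    case True
    have "m - (m - l) = l" "n - 2 * m = 1" "n - 2 * (m - l) = 2 * l + 1"
      using True n by auto
    then have "real (m choose l) * real ((2 * m + 1) choose m) * (real q - 1)
        \<le> real ((2 * l) choose l) * real ((2 * m + 1) choose (m - l)) * (real q ^ (2 * l + 1) - 1)"
      using k_uniform_choose_bound[OF psi, of m l] q True n by (simp add: mult_2)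
    then have "fact (m + l + 1) / fact (m + 1)
        \<le> ((real q) ^ (2 * l + 1) - 1) / (real q - 1) * (fact (2 * l) / fact l)"
      using q True by (intro le_quotient_mult_of_proportional[OF choose_odd_identity]) auto
    with H show False by simp
  next
    case False
    have "fact (m + l + 1) / fact (m + 1) \<le> (fact (2 * l) / fact l :: real)"
      using fact_quotient_mono[of "m + 1" l l] False by (simp add: mult_2 add.commute add.left_commute)
    also have "\<dots> \<le> ((real q) ^ (2 * l + 1) - 1) / (real q - 1) * (fact (2 * l) / fact l)"
      using mult_right_mono[OF one_le_power_diff_one_quotient[of "real q" 1 "2 * l + 1"],
          of "fact (2 * l) / fact l"] q
      by simp
    finally show False using H by simp
  qed
qed

theorem corollary1:
  fixes q n l m :: nat
  assumes "q \<ge> 2"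
    and "l \<ge> 1"
    and "even n \<Longrightarrow> l \<ge> 2"
    and "(n = 2 * m \<and>
          fact (m + l) / fact (m + 1) >
            ((real q) ^ (2 * l) - 1) / ((real q)\<^sup>2 - 1) * (fact (2 * l - 1) / fact l))
       \<or> (n = 2 * m + 1 \<and>
          fact (m + l + 1) / fact (m + 1) >
            ((real q) ^ (2 * l + 1) - 1) / (real q - 1) * (fact (2 * l) / fact l))"
  shows "\<not> (\<exists>psi. AME_defect q n l psi)"
  using assms(4)
proof (elim disjE conjE)
  assume "n = 2 * m" "fact (m + l) / fact (m + 1) >
            ((real q) ^ (2 * l) - 1) / ((real q)\<^sup>2 - 1) * (fact (2 * l - 1) / fact l)"
  then show ?thesis
    using no_AME_defect_even assms(1,3) by fastforce
next
  assume "n = 2 * m + 1" "fact (m + l + 1) / fact (m + 1) >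
            ((real q) ^ (2 * l + 1) - 1) / (real q - 1) * (fact (2 * l) / fact l)"
  then show ?thesis
    using no_AME_defect_odd assms(1,2) by blast
qed

end
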